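(* Let $N\ge 1$ and consider a multi-threshold neuron whose membrane voltage $V$ is a random variable uniformly distributed on $[0,1]$. Let $V_{th,1},\dots,V_{th,N}$ be thresholds with $V_{th,1}>V_{th,2}>\dots>V_{th,N}>0$ and $\sum_{i=1}^N V_{th,i}\le 1$. Suppose the neuron can fire at most one spike for each threshold, so that $V = \alpha_1 V_{th,1}+\alpha_2 V_{th,2}+\dots+\alpha_N V_{th,N}+r(V)$, where $\alpha_i\in\{0,1\}$ indicates whether a spike is fired at the $i$-th threshold and $r(V)\ge 0$ is the error between $V$ and the output weighted sum of spikes. Then the series of thresholds minimizing the expected error $\mathbb{E}[r(V)]=\int_0^1 r(V)\,dV$ satisfies $V_{th,i+1}=V_{th,i}/2$ for $i=1,\dots,N-1$ and $V_{th,N}=1/2^N$, and the minimal expected error equals $1/2^{N+1}$.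
   Context: Firing rule of the multi-threshold neuron: the thresholds are processed from highest to lowest. Set $R_0=V$; for $i=1,\dots,N$, the neuron fires a spike at threshold $i$ (i.e. $\alpha_i=1$) if $R_{i-1}\ge V_{th,i}$, and otherwise $\alpha_i=0$; then $R_i=R_{i-1}-\alpha_i V_{th,i}$. The error is $r(V)=R_N = V-\sum_{i=1}^N \alpha_i V_{th,i}$. *)

theory Defs
  imports "HOL-Analysis.Analysis"
begin

text \<open>Thresholds are given as a function th :: nat => real, where th i is the
i-th threshold (i = 1..N).  The remainder after processing thresholds 1..i
(from highest to lowest) follows the firing rule: R_0 = V, and a spike is
fired at threshold i iff R_(i-1) >= th i, in which case R_i = R_(i-1) - th i.\<close>

fun remainder :: "(nat \<Rightarrow> real) \<Rightarrow> real \<Rightarrow> nat \<Rightarrow> real" where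
  "remainder th V 0 = V"
| "remainder th V (Suc i) =
     (if remainder th V i \<ge> th (Suc i) then remainder th V i - th (Suc i)
      else remainder th V i)"

definition err :: "(nat \<Rightarrow> real) \<Rightarrow> nat \<Rightarrow> real \<Rightarrow> real" where
  "err th N V = remainder th V N"

definition expected_err :: "(nat \<Rightarrow> real) \<Rightarrow> nat \<Rightarrow> real" where
  "expected_err th N = integral {0..1} (err th N)"

definition admissible :: "nat \<Rightarrow> (nat \<Rightarrow> real) \<Rightarrow> bool" where
  "admissible N th \<longleftrightarrow>
     (\<forall>i\<in>{1..<N}. th i > th (Suc i)) \<and> th N > 0 \<and> (\<Sum>i=1..N. th i) \<le> 1"

end

theory Submission
  imports Defs
begin

text \<open>Peeling off the first threshold shows that the remainder after \<open>M + 1\<close> thresholds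
is the remainder after the last \<open>M\<close> thresholds, applied to \<open>V\<close> on \<open>[0, t)\<close> and to \<open>V - t\<close>
on \<open>[t, L]\<close>, where \<open>t\<close> is the first threshold.  Hence its integral \<open>J\<^sub>M\<^sub>+\<^sub>1(L)\<close> over \<open>[0, L]\<close>
equals \<open>J\<^sub>M(t) + J\<^sub>M(L - t)\<close> for \<open>t < L\<close> (and \<open>J\<^sub>M(L)\<close> otherwise).  By induction,
\<open>J\<^sub>M(L) \<ge> L\<^sup>2 / 2\<^sup>M\<^sup>+\<^sup>1\<close>, since \<open>t\<^sup>2 + (L - t)\<^sup>2 = L\<^sup>2/2 + (2t - L)\<^sup>2/2\<close>; equality forces
\<open>t = L/2\<close> and recursively the remaining thresholds \<open>L/4, L/8, \<dots>\<close>.  For \<open>L = 1\<close> this is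
the theorem.\<close>

definition remainder_integral :: "(nat \<Rightarrow> real) \<Rightarrow> nat \<Rightarrow> real \<Rightarrow> real" where
  "remainder_integral th M L = integral {0..L} (\<lambda>V. remainder th V M)"

lemma expected_err_eq_remainder_integral: "expected_err th N = remainder_integral th N 1"
  by (simp add: expected_err_def err_def[abs_def] remainder_integral_def)

lemma ball_atLeastAtMost_Suc_split:
  "(\<forall>i\<in>{1..Suc M}. P i) \<longleftrightarrow> P 1 \<and> (\<forall>i\<in>{1..M}. P (Suc i))"
proof -
  have "{1..Suc M} = insert 1 (Suc ` {1..M})"
    using Icc_eq_insert_lb_nat[of 1 "Suc M"] by simp
  then show ?thesis
    by (simp del: image_Suc_atLeastAtMost)
qed

lemma remainder_Suc_shift:
  "remainder th V (Suc n) =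
   remainder (\<lambda>k. th (Suc k)) (if th 1 \<le> V then V - th 1 else V) n"
  by (induction n) auto

lemma has_integral_remainder_Suc_below:
  assumes "L \<le> th 1"
    and "((\<lambda>V. remainder (\<lambda>k. th (Suc k)) V M) has_integral I) {0..L}"
  shows "((\<lambda>V. remainder th V (Suc M)) has_integral I) {0..L}"
proof (rule has_integral_spike_finite[OF _ _ assms(2), of "{th 1}"])
  fix V assume "V \<in> {0..L} - {th 1}"
  with assms(1) show "remainder th V (Suc M) = remainder (\<lambda>k. th (Suc k)) V M"
    by (simp add: remainder_Suc_shift del: remainder.simps)
qed simp

lemma has_integral_remainder_Suc_above:
  assumes "0 \<le> th 1" "th 1 \<le> L"
    and "((\<lambda>V. remainder (\<lambda>k. th (Suc k)) V M) has_integral I1) {0..th 1}"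
    and "((\<lambda>V. remainder (\<lambda>k. th (Suc k)) V M) has_integral I2) {0..L - th 1}"
  shows "((\<lambda>V. remainder th V (Suc M)) has_integral I1 + I2) {0..L}"
proof (rule has_integral_combine[OF assms(1,2)])
  show "((\<lambda>V. remainder th V (Suc M)) has_integral I1) {0..th 1}"
    using has_integral_remainder_Suc_below[OF order_refl assms(3)] .
  have "((\<lambda>V. remainder (\<lambda>k. th (Suc k)) (V + - th 1) M) has_integral I2)
      {0 - - th 1..(L - th 1) - - th 1}"
    by (rule has_integral_shift_real_ivl[OF assms(4)])
  then have "((\<lambda>V. remainder (\<lambda>k. th (Suc k)) (V - th 1) M) has_integral I2) {th 1..L}"
    by simp
  then show "((\<lambda>V. remainder th V (Suc M)) has_integral I2) {th 1..L}"
    by (rule has_integral_eq[rotated]) (simp add: remainder_Suc_shift del: remainder.simps)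
qed

lemma remainder_integrable:
  assumes "0 \<le> L" "\<forall>i\<in>{1..M}. 0 < th i"
  shows "(\<lambda>V. remainder th V M) integrable_on {0..L}"
  using assms
proof (induction M arbitrary: th L)
  case 0
  show ?case
    by (simp add: integrable_continuous_interval)
next
  case (Suc M)
  have "0 < th 1" and "\<forall>i\<in>{1..M}. 0 < th (Suc i)"
    using Suc.prems(2) unfolding ball_atLeastAtMost_Suc_split by simp_all
  with Suc.IH have IH: "\<exists>I. ((\<lambda>V. remainder (\<lambda>k. th (Suc k)) V M) has_integral I) {0..L'}"
    if "0 \<le> L'" for L'
    using that by (simp add: integrable_on_def)
  show ?case
  proof (cases "L \<le> th 1")
    case True
    with IH[OF Suc.prems(1)] show ?thesis
      unfolding integrable_on_def by (metis has_integral_remainder_Suc_below)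
  next
    case False
    then have "th 1 \<le> L" and "0 \<le> L - th 1"
      by simp_all
    with IH[of "th 1"] IH[of "L - th 1"] \<open>0 < th 1\<close> show ?thesis
      unfolding integrable_on_def by (metis has_integral_remainder_Suc_above less_imp_le)
  qed
qed

lemma remainder_integral_0:
  assumes "0 \<le> L"
  shows "remainder_integral th 0 L = L\<^sup>2 / 2"
  using ident_has_integral[OF assms] by (simp add: remainder_integral_def integral_unique)

lemma remainder_integral_Suc:
  assumes "0 \<le> L" "\<forall>i\<in>{1..Suc M}. 0 < th i"
  shows "remainder_integral th (Suc M) L =
    (if L \<le> th 1 then remainder_integral (\<lambda>k. th (Suc k)) M L
     else remainder_integral (\<lambda>k. th (Suc k)) M (th 1)
        + remainder_integral (\<lambda>k. th (Suc k)) M (L - th 1))"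
proof -
  let ?g = "\<lambda>V. remainder (\<lambda>k. th (Suc k)) V M"
  have "0 < th 1" and "\<forall>i\<in>{1..M}. 0 < th (Suc i)"
    using assms(2) unfolding ball_atLeastAtMost_Suc_split by simp_all
  then have g: "(?g has_integral integral {0..L'} ?g) {0..L'}" if "0 \<le> L'" for L'
    using remainder_integrable[OF that, of M "\<lambda>k. th (Suc k)"] by (simp add: integrable_integral)
  show ?thesis
  proof (cases "L \<le> th 1")
    case True
    then show ?thesis
      using has_integral_remainder_Suc_below[OF True g[OF assms(1)]]
      by (simp add: remainder_integral_def integral_unique)
  next
    case False
    then show ?thesis
      using has_integral_remainder_Suc_above[of th L, OF _ _ g g] \<open>0 < th 1\<close>
      by (simp add: remainder_integral_def integral_unique)
  qed
qed

lemma sum_squares_divide_eq: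
  fixes a b c :: "'a::field_char_0"
  shows "(a\<^sup>2 + b\<^sup>2) / c = (a + b)\<^sup>2 / (2 * c) + (a - b)\<^sup>2 / (2 * c)"
proof -
  have "(a + b)\<^sup>2 + (a - b)\<^sup>2 = 2 * (a\<^sup>2 + b\<^sup>2)"
    by (simp add: power2_eq_square algebra_simps)
  then have "(a + b)\<^sup>2 / (2 * c) + (a - b)\<^sup>2 / (2 * c) = 2 * (a\<^sup>2 + b\<^sup>2) / (2 * c)"
    by (simp only: add_divide_distrib[symmetric])
  also have "\<dots> = (a\<^sup>2 + b\<^sup>2) / c"
    by (rule mult_divide_mult_cancel_left) simp
  finally show ?thesis ..
qed

lemma remainder_integral_ge:
  assumes "0 \<le> L" "\<forall>i\<in>{1..M}. 0 < th i"
  shows "L\<^sup>2 / 2 ^ (M + 1) \<le> remainder_integral th M L"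
  using assms
proof (induction M arbitrary: th L)
  case 0
  then show ?case
    by (simp add: remainder_integral_0)
next
  case (Suc M)
  let ?J = "remainder_integral (\<lambda>k. th (Suc k)) M"
  have "0 < th 1" and "\<forall>i\<in>{1..M}. 0 < th (Suc i)"
    using Suc.prems(2) unfolding ball_atLeastAtMost_Suc_split by simp_all
  with Suc.IH have IH: "L'\<^sup>2 / 2 ^ (M + 1) \<le> ?J L'" if "0 \<le> L'" for L'
    using that by simp
  show ?case
  proof (cases "L \<le> th 1")
    case True
    have "L\<^sup>2 / 2 ^ (Suc M + 1) \<le> L\<^sup>2 / 2 ^ (M + 1)"
      by (simp add: divide_left_mono)
    also have "\<dots> \<le> ?J L"
      using IH Suc.prems(1) .
    also have "\<dots> = remainder_integral th (Suc M) L"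
      using remainder_integral_Suc Suc.prems True by simp
    finally show ?thesis .
  next
    case False
    have "L\<^sup>2 / 2 ^ (Suc M + 1) \<le> L\<^sup>2 / 2 ^ (Suc M + 1) + (2 * th 1 - L)\<^sup>2 / 2 ^ (Suc M + 1)"
      by simp
    also have "\<dots> = ((th 1)\<^sup>2 + (L - th 1)\<^sup>2) / 2 ^ (M + 1)"
      using sum_squares_divide_eq[of "th 1" "L - th 1" "2 ^ (M + 1)"] by (simp add: algebra_simps)
    also have "\<dots> \<le> ?J (th 1) + ?J (L - th 1)"
      using IH[of "th 1"] IH[of "L - th 1"] False \<open>0 < th 1\<close> by (simp add: add_divide_distrib)
    also have "\<dots> = remainder_integral th (Suc M) L"
      using remainder_integral_Suc Suc.prems False by simp
    finally show ?thesis .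
  qed
qed

lemma remainder_integral_eq_iff:
  assumes "0 < L" "\<forall>i\<in>{1..M}. 0 < th i"
  shows "remainder_integral th M L = L\<^sup>2 / 2 ^ (M + 1) \<longleftrightarrow> (\<forall>i\<in>{1..M}. th i = L / 2 ^ i)"
  using assms
proof (induction M arbitrary: th L)
  case 0
  then show ?case
    by (simp add: remainder_integral_0)
next
  case (Suc M)
  let ?J = "remainder_integral (\<lambda>k. th (Suc k)) M"
  let ?c = "(2::real) ^ (M + 1)"
  have "0 < th 1" and pos: "\<forall>i\<in>{1..M}. 0 < th (Suc i)"
    using Suc.prems(2) unfolding ball_atLeastAtMost_Suc_split by simp_all
  have lower: "L'\<^sup>2 / ?c \<le> ?J L'" if "0 \<le> L'" for L'
    using remainder_integral_ge[OF that pos] .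
  have dyadic_split: "(\<forall>i\<in>{1..Suc M}. th i = L / 2 ^ i) \<longleftrightarrow>
      th 1 = L / 2 \<and> (\<forall>i\<in>{1..M}. th (Suc i) = (L / 2) / 2 ^ i)"
    unfolding ball_atLeastAtMost_Suc_split by simp
  show ?case
  proof (cases "L \<le> th 1")
    case True
    have "L\<^sup>2 / 2 ^ (Suc M + 1) < L\<^sup>2 / ?c"
      using Suc.prems(1) by (simp add: divide_strict_left_mono)
    also have "\<dots> \<le> remainder_integral th (Suc M) L"
      using lower[of L] remainder_integral_Suc Suc.prems True by simp
    finally show ?thesis
      using dyadic_split True Suc.prems(1) by auto
  next
    case False
    have split: "remainder_integral th (Suc M) L = ?J (th 1) + ?J (L - th 1)"
      using remainder_integral_Suc Suc.prems False by simp
    have sq: "(th 1)\<^sup>2 / ?c + (L - th 1)\<^sup>2 / ?c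
        = L\<^sup>2 / 2 ^ (Suc M + 1) + (2 * th 1 - L)\<^sup>2 / 2 ^ (Suc M + 1)"
      using sum_squares_divide_eq[of "th 1" "L - th 1" ?c] by (simp add: algebra_simps add_divide_distrib)
    have "0 \<le> (2 * th 1 - L)\<^sup>2 / 2 ^ (Suc M + 1)"
      by simp
    note bounds = this sq split lower[of "th 1"] lower[of "L - th 1"]
    show ?thesis
    proof
      assume "remainder_integral th (Suc M) L = L\<^sup>2 / 2 ^ (Suc M + 1)"
      then have "(2 * th 1 - L)\<^sup>2 / 2 ^ (Suc M + 1) = 0" and "?J (th 1) = (th 1)\<^sup>2 / ?c"
        using bounds False \<open>0 < th 1\<close> by linarith+
      then have "th 1 = L / 2" and "\<forall>i\<in>{1..M}. th (Suc i) = th 1 / 2 ^ i"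
        using Suc.IH[OF \<open>0 < th 1\<close> pos] by simp_all
      then show "\<forall>i\<in>{1..Suc M}. th i = L / 2 ^ i"
        using dyadic_split by (simp add: field_simps)
    next
      assume "\<forall>i\<in>{1..Suc M}. th i = L / 2 ^ i"
      then have half: "th 1 = L / 2" and "\<forall>i\<in>{1..M}. th (Suc i) = th 1 / 2 ^ i"
        using dyadic_split by simp_all
      then have "?J (th 1) = (th 1)\<^sup>2 / ?c"
        using Suc.IH[OF \<open>0 < th 1\<close> pos] by simp
      moreover have "L - th 1 = th 1"
        using half by simp
      ultimately show "remainder_integral th (Suc M) L = L\<^sup>2 / 2 ^ (Suc M + 1)"
        using split half by (simp add: power2_eq_square field_simps)
    qed
  qed
qed

lemma admissible_pos:
  assumes "admissible N th"
  shows "\<forall>i\<in>{1..N}. 0 < th i"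
proof
  fix i assume i: "i \<in> {1..N}"
  have "i \<le> N" "1 \<le> i"
    using i by simp_all
  then have "th N \<le> th i"
  proof (induction i rule: inc_induct)
    case (step n)
    then have "th (Suc n) < th n"
      using assms unfolding admissible_def by simp
    with step show ?case
      by simp
  qed simp
  then show "0 < th i"
    using assms unfolding admissible_def by simp
qed

lemma sum_inverse_powers_of_two: "(\<Sum>i=1..N. 1 / 2 ^ i :: real) = 1 - 1 / 2 ^ N"
  by (induction N) (simp_all add: field_simps)

lemma admissible_dyadic: "admissible N (\<lambda>i. 1 / 2 ^ i)"
  unfolding admissible_def sum_inverse_powers_of_two by (simp add: field_simps)

lemma expected_err_ge:
  assumes "admissible N th"
  shows "1 / 2 ^ (N + 1) \<le> expected_err th N"
  using remainder_integral_ge[of 1 N th] admissible_pos[OF assms]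
  by (simp add: expected_err_eq_remainder_integral)

lemma expected_err_eq_iff:
  assumes "admissible N th"
  shows "expected_err th N = 1 / 2 ^ (N + 1) \<longleftrightarrow> (\<forall>i\<in>{1..N}. th i = 1 / 2 ^ i)"
  using remainder_integral_eq_iff[of 1 N th] admissible_pos[OF assms]
  by (simp add: expected_err_eq_remainder_integral)

theorem theorem1:
  fixes N :: nat
  assumes "N \<ge> 1"
  shows "(\<exists>th. admissible N th \<and> expected_err th N = 1 / 2 ^ (N + 1))
       \<and> (\<forall>th. admissible N th \<longrightarrow> expected_err th N \<ge> 1 / 2 ^ (N + 1))
       \<and> (\<forall>th. admissible N th \<longrightarrow>
              (\<forall>th'. admissible N th' \<longrightarrow> expected_err th N \<le> expected_err th' N) \<longrightarrow>
              (\<forall>i\<in>{1..<N}. th (Suc i) = th i / 2) \<and> th N = 1 / 2 ^ N)"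
proof (intro conjI allI impI)
  let ?dyadic = "\<lambda>i::nat. 1 / 2 ^ i :: real"
  have dyadic_optimal: "expected_err ?dyadic N = 1 / 2 ^ (N + 1)"
    using expected_err_eq_iff[OF admissible_dyadic] by simp
  then show "\<exists>th. admissible N th \<and> expected_err th N = 1 / 2 ^ (N + 1)"
    using admissible_dyadic by blast
  show "1 / 2 ^ (N + 1) \<le> expected_err th N" if "admissible N th" for th
    using expected_err_ge[OF that] .
  fix th
  assume adm: "admissible N th"
    and min: "\<forall>th'. admissible N th' \<longrightarrow> expected_err th N \<le> expected_err th' N"
  have "expected_err th N = 1 / 2 ^ (N + 1)"
    using min admissible_dyadic dyadic_optimal expected_err_ge[OF adm] by (metis order_antisym)
  then have dyadic: "\<forall>i\<in>{1..N}. th i = 1 / 2 ^ i"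
    using expected_err_eq_iff[OF adm] by blast
  then show "\<forall>i\<in>{1..<N}. th (Suc i) = th i / 2"
    by simp
  show "th N = 1 / 2 ^ N"
    using dyadic assms by simp
qed

end
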